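(* In the setting described in the context, for any $a\in\mathfrak{z}$ and any positive integer $n$, $$\mathrm{S}^r(a^n)=\sum_{i=0}^n r^{n-i}(1-r)^i\, a^i\ast \mathrm{S}(a^{n-i}),$$ where $\mathrm{S}=\mathrm{S}^1$. Equivalently, for a formal variable $u$, $\mathrm{S}^r\!\left(\frac{1}{1-au}\right)=\frac{1}{1-a(1-r)u}\ast \mathrm{S}\!\left(\frac{1}{1-aru}\right)$.
   Context: $\mathfrak{A}$ is a commutative $\mathbb{Q}$-algebra, $A$ a set of non-commutative letters, $\mathfrak{h}^1$ the non-commutative polynomial algebra over $\mathfrak{A}$ generated by $A$, and $\mathfrak{z}$ the $\mathfrak{A}$-span of $A$, equipped with a commutative (not necessarily unital) $\mathfrak{A}$-algebra product $\circ$. This acts on $\mathfrak{h}^1$ by $\mathfrak{A}$-linearity and $a\circ 1_w=0$, $a\circ(bw)=(a\circ b)w$ ($a,b\in A$, $w$ a word, $1_w$ the empty word). The harmonic product $\ast$ on $\mathfrak{h}^1$ is the $\mathfrak{A}$-bilinear product with $1_w\ast w=w\ast 1_w=w$ and $aw_1\ast bw_2=a(w_1\ast bw_2)+b(aw_1\ast w_2)+(a\circ b)(w_1\ast w_2)$ for $a,b\in A$ and words $w,w_1,w_2$ (extended $r$-linearly and to formal power series in $u$). For a variable $r$, $\mathrm{S}^r$ is the $\mathfrak{A}[r]$-linear map on $\mathfrak{h}^1[r]$ with $\mathrm{S}^r(1_w)=1_w$ and $\mathrm{S}^r(aw)=a\mathrm{S}^r(w)+r\,a\circ\mathrm{S}^r(w)$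 for $a\in A$ and words $w$; $\mathrm{S}:=\mathrm{S}^1$. Here $a^n$ denotes the $n$-fold concatenation power of $a$ ($a^0=1_w$). *)

theory Defs
  imports "HOL-Library.Poly_Mapping" "HOL-Computational_Algebra.Polynomial"
begin

text \<open>The coefficient ring is a commutative Q-algebra: a commutative ring in which
  every positive integer is invertible.\<close>
definition rat_algebra :: "'k::comm_ring_1 itself \<Rightarrow> bool" where
  "rat_algebra _ \<longleftrightarrow> (\<forall>n::nat. n > 0 \<longrightarrow> (\<exists>x::'k. of_nat n * x = 1))"

text \<open>Non-commutative polynomials over coefficients 'c in letters 'l:
  finitely supported functions on words.\<close>
type_synonym ('l,'c) nc = "'l list \<Rightarrow>\<^sub>0 'c"

definition ncsmult :: "'c::comm_ring_1 \<Rightarrow> ('l,'c) nc \<Rightarrow> ('l,'c) nc" where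
  "ncsmult c p = Poly_Mapping.map (\<lambda>x. c * x) p"

definition linext :: "('l list \<Rightarrow> ('m,'c::comm_ring_1) nc) \<Rightarrow> ('l,'c) nc \<Rightarrow> ('m,'c) nc" where
  "linext F p = (\<Sum>w\<in>Poly_Mapping.keys p. ncsmult (Poly_Mapping.lookup p w) (F w))"

definition word :: "'l list \<Rightarrow> ('l,'c::comm_ring_1) nc" where
  "word w = Poly_Mapping.single w 1"

definition ncmult :: "('l,'c::comm_ring_1) nc \<Rightarrow> ('l,'c) nc \<Rightarrow> ('l,'c) nc" where
  "ncmult p q = (\<Sum>u\<in>Poly_Mapping.keys p. \<Sum>v\<in>Poly_Mapping.keys q. Poly_Mapping.single (u @ v) (Poly_Mapping.lookup p u * Poly_Mapping.lookup q v))"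

primrec ncpow :: "('l,'c::comm_ring_1) nc \<Rightarrow> nat \<Rightarrow> ('l,'c) nc" where
  "ncpow p 0 = word []"
| "ncpow p (Suc n) = ncmult p (ncpow p n)"

text \<open>Elements of the span of the letters (the space z), embedded into h^1.\<close>
definition zemb :: "('l \<Rightarrow>\<^sub>0 'c::comm_ring_1) \<Rightarrow> ('l,'c) nc" where
  "zemb a = (\<Sum>x\<in>Poly_Mapping.keys a. Poly_Mapping.single [x] (Poly_Mapping.lookup a x))"

text \<open>The product on z is given by structure constants g x y = x o y (for letters x, y),
  extended bilinearly.\<close>
definition zprod :: "('l \<Rightarrow> 'l \<Rightarrow> ('l \<Rightarrow>\<^sub>0 'c::comm_ring_1)) \<Rightarrow> ('l \<Rightarrow>\<^sub>0 'c) \<Rightarrow> ('l \<Rightarrow>\<^sub>0 'c) \<Rightarrow> ('l \<Rightarrow>\<^sub>0 'c)" where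
  "zprod g z1 z2 = (\<Sum>x\<in>Poly_Mapping.keys z1. \<Sum>y\<in>Poly_Mapping.keys z2.
      Poly_Mapping.map (\<lambda>c. Poly_Mapping.lookup z1 x * Poly_Mapping.lookup z2 y * c) (g x y))"

definition circ_word :: "('l \<Rightarrow> 'l \<Rightarrow> ('l \<Rightarrow>\<^sub>0 'c::comm_ring_1)) \<Rightarrow> 'l \<Rightarrow> 'l list \<Rightarrow> ('l,'c) nc" where
  "circ_word g a w = (case w of [] \<Rightarrow> 0 | b # w' \<Rightarrow> ncmult (zemb (g a b)) (word w'))"

definition circ_letter :: "('l \<Rightarrow> 'l \<Rightarrow> ('l \<Rightarrow>\<^sub>0 'c::comm_ring_1)) \<Rightarrow> 'l \<Rightarrow> ('l,'c) nc \<Rightarrow> ('l,'c) nc" where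
  "circ_letter g a P = linext (circ_word g a) P"

fun harm_word :: "('l \<Rightarrow> 'l \<Rightarrow> ('l \<Rightarrow>\<^sub>0 'c::comm_ring_1)) \<Rightarrow> 'l list \<Rightarrow> 'l list \<Rightarrow> ('l,'c) nc" where
  "harm_word g [] w = word w"
| "harm_word g w [] = word w"
| "harm_word g (a # u) (b # v) =
     ncmult (word [a]) (harm_word g u (b # v))
   + ncmult (word [b]) (harm_word g (a # u) v)
   + ncmult (zemb (g a b)) (harm_word g u v)"

definition harm :: "('l \<Rightarrow> 'l \<Rightarrow> ('l \<Rightarrow>\<^sub>0 'c::comm_ring_1)) \<Rightarrow> ('l,'c) nc \<Rightarrow> ('l,'c) nc \<Rightarrow> ('l,'c) nc" where
  "harm g p q = linext (\<lambda>u. linext (\<lambda>v. harm_word g u v) q) p"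

fun Sr_word :: "('l \<Rightarrow> 'l \<Rightarrow> ('l \<Rightarrow>\<^sub>0 'c::comm_ring_1)) \<Rightarrow> 'c \<Rightarrow> 'l list \<Rightarrow> ('l,'c) nc" where
  "Sr_word g r [] = word []"
| "Sr_word g r (a # w) = ncmult (word [a]) (Sr_word g r w) + ncsmult r (circ_letter g a (Sr_word g r w))"

definition Sr :: "('l \<Rightarrow> 'l \<Rightarrow> ('l \<Rightarrow>\<^sub>0 'c::comm_ring_1)) \<Rightarrow> 'c \<Rightarrow> ('l,'c) nc \<Rightarrow> ('l,'c) nc" where
  "Sr g r = linext (Sr_word g r)"

text \<open>Extension of scalars from A to A[r] (constant polynomials).\<close>
definition liftc :: "('l \<Rightarrow>\<^sub>0 'k::comm_ring_1) \<Rightarrow> ('l \<Rightarrow>\<^sub>0 'k poly)" where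
  "liftc z = Poly_Mapping.map (\<lambda>c. [:c:]) z"

end

theory Submission
  imports Defs
begin

(* Write c_k for the (k+1)-fold product a o ... o a in z. Splitting off the first letter,
   P_n = S^r(a^n) satisfies P_0 = 1 and P_(n+1) = sum_(k<=n) r^k c_k P_(n-k), which determines P.
   It therefore suffices that the right-hand side T_n obeys the same recursion. For
   H_(i,m) = a^i * S(a^m) the recursion of the harmonic product gives the Pascal-type rule
   H_(i+1,m+1) = Y_(i+1,m) + Y_(i,m+1) with Y_(i,m) = sum_k c_k H_(i,m-k), together with
   H_(0,m+1) = Y_(0,m) and H_(i+1,0) = Y_(i,0). Both T_(n+1) and sum_k r^k c_k T_(n-k) then
   reduce to sum_j r^(n-j) (1-r)^j Y_(j,n-j), the former because r + (1 - r) = 1. *)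

definition pm_smult :: "'c::comm_ring_1 \<Rightarrow> ('a \<Rightarrow>\<^sub>0 'c) \<Rightarrow> ('a \<Rightarrow>\<^sub>0 'c)" where
  "pm_smult c p = Poly_Mapping.map ((*) c) p"

lemma lookup_pm_smult [simp]: "Poly_Mapping.lookup (pm_smult c p) k = c * Poly_Mapping.lookup p k"
  by (simp add: pm_smult_def Poly_Mapping.map.rep_eq when_def)

lemma pm_smult_add_right: "pm_smult c (p + q) = pm_smult c p + pm_smult c q"
  by (rule poly_mapping_eqI) (simp add: lookup_add algebra_simps)

lemma pm_smult_add_left: "pm_smult (c + d) p = pm_smult c p + pm_smult d p"
  by (rule poly_mapping_eqI) (simp add: lookup_add algebra_simps)

lemma pm_smult_pm_smult [simp]: "pm_smult c (pm_smult d p) = pm_smult (c * d) p"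
  by (rule poly_mapping_eqI) (simp add: algebra_simps)

lemma pm_smult_one [simp]: "pm_smult 1 p = p"
  by (rule poly_mapping_eqI) simp

lemma pm_smult_zero_left [simp]: "pm_smult 0 p = 0"
  by (rule poly_mapping_eqI) simp

lemma pm_smult_zero_right [simp]: "pm_smult c 0 = 0"
  by (rule poly_mapping_eqI) simp

lemma pm_smult_single [simp]: "pm_smult c (Poly_Mapping.single k d) = Poly_Mapping.single k (c * d)"
  by (rule poly_mapping_eqI) (simp add: lookup_single when_def)

lemma pm_smult_sum_right: "pm_smult c (sum f I) = (\<Sum>i\<in>I. pm_smult c (f i))"
  by (induction I rule: infinite_finite_induct) (auto simp: pm_smult_add_right)

lemma keys_pm_smult: "Poly_Mapping.keys (pm_smult c p) \<subseteq> Poly_Mapping.keys p"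
  by (auto simp: in_keys_iff)

definition pm_extend :: "('a \<Rightarrow> ('b \<Rightarrow>\<^sub>0 'c::comm_ring_1)) \<Rightarrow> ('a \<Rightarrow>\<^sub>0 'c) \<Rightarrow> ('b \<Rightarrow>\<^sub>0 'c)" where
  "pm_extend F p = (\<Sum>k\<in>Poly_Mapping.keys p. pm_smult (Poly_Mapping.lookup p k) (F k))"

lemma pm_extend_eq_sum:
  assumes "finite S" "Poly_Mapping.keys p \<subseteq> S"
  shows "pm_extend F p = (\<Sum>k\<in>S. pm_smult (Poly_Mapping.lookup p k) (F k))"
  unfolding pm_extend_def using assms by (intro sum.mono_neutral_left) (auto simp: in_keys_iff)

lemma pm_extend_add: "pm_extend F (p + q) = pm_extend F p + pm_extend F q"
proof -
  let ?S = "Poly_Mapping.keys p \<union> Poly_Mapping.keys q"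
  have "pm_extend F (p + q) = (\<Sum>k\<in>?S. pm_smult (Poly_Mapping.lookup (p + q) k) (F k))"
    by (rule pm_extend_eq_sum) (simp_all add: keys_add)
  also have "\<dots> = (\<Sum>k\<in>?S. pm_smult (Poly_Mapping.lookup p k) (F k))
      + (\<Sum>k\<in>?S. pm_smult (Poly_Mapping.lookup q k) (F k))"
    by (simp add: lookup_add pm_smult_add_left sum.distrib)
  also have "\<dots> = pm_extend F p + pm_extend F q"
    by (simp add: pm_extend_eq_sum[of ?S])
  finally show ?thesis .
qed

lemma pm_extend_smult: "pm_extend F (pm_smult c p) = pm_smult c (pm_extend F p)"
  using pm_extend_eq_sum[OF finite_keys keys_pm_smult, of F c p]
  by (simp add: pm_extend_def pm_smult_sum_right)

lemma pm_extend_single [simp]: "pm_extend F (Poly_Mapping.single k c) = pm_smult c (F k)"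
  by (simp add: pm_extend_def)

lemma pm_extend_fun_add: "pm_extend (\<lambda>k. F k + G k) p = pm_extend F p + pm_extend G p"
  by (simp add: pm_extend_def pm_smult_add_right sum.distrib)

lemma pm_extend_fun_smult: "pm_extend (\<lambda>k. pm_smult c (F k)) p = pm_smult c (pm_extend F p)"
  by (simp add: pm_extend_def pm_smult_sum_right mult.commute)

lemma pm_extend_single_one: "pm_extend (\<lambda>k. Poly_Mapping.single k 1) p = p"
  by (rule poly_mapping_eqI)
     (simp add: pm_extend_def lookup_sum lookup_single when_def in_keys_iff)

definition pm_linear :: "(('a \<Rightarrow>\<^sub>0 'c::comm_ring_1) \<Rightarrow> ('b \<Rightarrow>\<^sub>0 'c)) \<Rightarrow> bool" where
  "pm_linear F \<longleftrightarrow> (\<forall>p q. F (p + q) = F p + F q) \<and> (\<forall>c p. F (pm_smult c p) = pm_smult c (F p))"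

lemma pm_linear_add: "pm_linear F \<Longrightarrow> F (p + q) = F p + F q"
  and pm_linear_smult: "pm_linear F \<Longrightarrow> F (pm_smult c p) = pm_smult c (F p)"
  by (auto simp: pm_linear_def)

lemma pm_linear_0: "pm_linear F \<Longrightarrow> F 0 = 0"
  using pm_linear_smult[of F 0 0] by simp

lemma pm_linear_sum: "pm_linear F \<Longrightarrow> F (sum f I) = (\<Sum>i\<in>I. F (f i))"
  by (induction I rule: infinite_finite_induct) (auto simp: pm_linear_0 pm_linear_add)

lemma pm_linear_eq_pm_extend:
  assumes "pm_linear F"
  shows "F p = pm_extend (\<lambda>k. F (Poly_Mapping.single k 1)) p"
proof -
  have "F p = F (pm_extend (\<lambda>k. Poly_Mapping.single k 1) p)"
    by (simp add: pm_extend_single_one)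
  also have "\<dots> = pm_extend (\<lambda>k. F (Poly_Mapping.single k 1)) p"
    unfolding pm_extend_def by (simp add: pm_linear_sum[OF assms] flip: pm_linear_smult[OF assms])
  finally show ?thesis .
qed

lemma pm_linear_eqI:
  assumes "pm_linear F" "pm_linear G" "\<And>k. F (Poly_Mapping.single k 1) = G (Poly_Mapping.single k 1)"
  shows "F p = G p"
  using assms(3)
  by (simp add: pm_linear_eq_pm_extend[OF assms(1), of p] pm_linear_eq_pm_extend[OF assms(2), of p])

lemma pm_linear_pm_extend: "pm_linear (pm_extend F)"
  by (simp add: pm_linear_def pm_extend_add pm_extend_smult)

lemma pm_linear_ident: "pm_linear (\<lambda>p. p)"
  and pm_linear_zero: "pm_linear (\<lambda>p. 0)"
  by (simp_all add: pm_linear_def)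

lemma pm_linear_compose_add: "pm_linear F \<Longrightarrow> pm_linear G \<Longrightarrow> pm_linear (\<lambda>p. F p + G p)"
  by (simp add: pm_linear_def pm_smult_add_right)

lemma pm_linear_compose_smult: "pm_linear F \<Longrightarrow> pm_linear (\<lambda>p. pm_smult c (F p))"
  by (simp add: pm_linear_def pm_smult_add_right mult.commute)

lemma pm_linear_compose: "pm_linear F \<Longrightarrow> pm_linear G \<Longrightarrow> pm_linear (\<lambda>p. F (G p))"
  by (simp add: pm_linear_def)

definition pm_extend2 :: "('a \<Rightarrow> 'b \<Rightarrow> ('d \<Rightarrow>\<^sub>0 'c::comm_ring_1)) \<Rightarrow> ('a \<Rightarrow>\<^sub>0 'c) \<Rightarrow> ('b \<Rightarrow>\<^sub>0 'c) \<Rightarrow> ('d \<Rightarrow>\<^sub>0 'c)" where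
  "pm_extend2 K p q = pm_extend (\<lambda>u. pm_extend (K u) q) p"

lemma pm_linear_pm_extend2_left: "pm_linear (\<lambda>p. pm_extend2 K p q)"
  by (simp add: pm_extend2_def pm_linear_pm_extend)

lemma pm_linear_pm_extend2_right: "pm_linear (\<lambda>q. pm_extend2 K p q)"
  by (simp add: pm_extend2_def pm_linear_def pm_extend_add pm_extend_smult pm_extend_fun_add pm_extend_fun_smult)

lemma pm_extend2_single_single [simp]:
  "pm_extend2 K (Poly_Mapping.single u c) (Poly_Mapping.single v d) = pm_smult (c * d) (K u v)"
  by (simp add: pm_extend2_def pm_extend_fun_smult mult.commute)

lemma ncsmult_eq_pm_smult: "ncsmult = pm_smult"
  by (simp add: fun_eq_iff ncsmult_def pm_smult_def)

lemma linext_eq_pm_extend: "linext = pm_extend"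
  by (simp add: fun_eq_iff linext_def pm_extend_def ncsmult_eq_pm_smult)

lemma ncmult_eq_pm_extend2: "ncmult = pm_extend2 (\<lambda>u v. word (u @ v))"
  by (simp add: fun_eq_iff ncmult_def pm_extend2_def pm_extend_def pm_smult_sum_right word_def mult.commute)

lemma harm_eq_pm_extend2: "harm g = pm_extend2 (harm_word g)"
  by (simp add: fun_eq_iff harm_def pm_extend2_def linext_eq_pm_extend)

lemma zemb_eq_pm_extend: "zemb = pm_extend (\<lambda>x. word [x])"
  by (simp add: fun_eq_iff zemb_def pm_extend_def word_def)

lemma zprod_eq_pm_extend2: "zprod g = pm_extend2 g"
  by (simp add: fun_eq_iff zprod_def pm_extend2_def pm_extend_def pm_smult_sum_right flip: pm_smult_def)

lemma Sr_eq_pm_extend: "Sr g r = pm_extend (Sr_word g r)"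
  by (simp add: Sr_def linext_eq_pm_extend)

definition circ :: "('l \<Rightarrow> 'l \<Rightarrow> ('l \<Rightarrow>\<^sub>0 'c::comm_ring_1)) \<Rightarrow> ('l \<Rightarrow>\<^sub>0 'c) \<Rightarrow> ('l, 'c) nc \<Rightarrow> ('l, 'c) nc" where
  "circ g = pm_extend2 (circ_word g)"

lemma circ_letter_eq_circ: "circ_letter g x = circ g (Poly_Mapping.single x 1)"
  by (simp add: fun_eq_iff circ_letter_def circ_def pm_extend2_def linext_eq_pm_extend)

lemma pm_linear_ncmult_left: "pm_linear F \<Longrightarrow> pm_linear (\<lambda>x. ncmult (F x) q)"
  unfolding ncmult_eq_pm_extend2 by (rule pm_linear_compose[OF pm_linear_pm_extend2_left])

lemma pm_linear_ncmult_right: "pm_linear F \<Longrightarrow> pm_linear (\<lambda>x. ncmult p (F x))"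
  unfolding ncmult_eq_pm_extend2 by (rule pm_linear_compose[OF pm_linear_pm_extend2_right])

lemma pm_linear_harm_left: "pm_linear F \<Longrightarrow> pm_linear (\<lambda>x. harm g (F x) q)"
  unfolding harm_eq_pm_extend2 by (rule pm_linear_compose[OF pm_linear_pm_extend2_left])

lemma pm_linear_harm_right: "pm_linear F \<Longrightarrow> pm_linear (\<lambda>x. harm g p (F x))"
  unfolding harm_eq_pm_extend2 by (rule pm_linear_compose[OF pm_linear_pm_extend2_right])

lemma pm_linear_zprod_left: "pm_linear F \<Longrightarrow> pm_linear (\<lambda>x. zprod g (F x) b)"
  unfolding zprod_eq_pm_extend2 by (rule pm_linear_compose[OF pm_linear_pm_extend2_left])

lemma pm_linear_zprod_right: "pm_linear F \<Longrightarrow> pm_linear (\<lambda>x. zprod g b (F x))"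
  unfolding zprod_eq_pm_extend2 by (rule pm_linear_compose[OF pm_linear_pm_extend2_right])

lemma pm_linear_circ_left: "pm_linear F \<Longrightarrow> pm_linear (\<lambda>x. circ g (F x) q)"
  unfolding circ_def by (rule pm_linear_compose[OF pm_linear_pm_extend2_left])

lemma pm_linear_circ_right: "pm_linear F \<Longrightarrow> pm_linear (\<lambda>x. circ g b (F x))"
  unfolding circ_def by (rule pm_linear_compose[OF pm_linear_pm_extend2_right])

lemma pm_linear_zemb: "pm_linear F \<Longrightarrow> pm_linear (\<lambda>x. zemb (F x))"
  unfolding zemb_eq_pm_extend by (rule pm_linear_compose[OF pm_linear_pm_extend])

lemma pm_linear_Sr: "pm_linear F \<Longrightarrow> pm_linear (\<lambda>x. Sr g r (F x))"
  unfolding Sr_eq_pm_extend by (rule pm_linear_compose[OF pm_linear_pm_extend])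

lemmas pm_linear_intros = pm_linear_ident pm_linear_zero pm_linear_compose_add pm_linear_compose_smult
  pm_linear_ncmult_left pm_linear_ncmult_right pm_linear_harm_left pm_linear_harm_right
  pm_linear_zprod_left pm_linear_zprod_right pm_linear_circ_left pm_linear_circ_right
  pm_linear_zemb pm_linear_Sr

lemma ncmult_word_word [simp]: "ncmult (word u) (word v) = word (u @ v)"
  by (simp add: ncmult_eq_pm_extend2 word_def)

lemma zemb_single_one [simp]: "zemb (Poly_Mapping.single x 1) = word [x]"
  by (simp add: zemb_eq_pm_extend)

lemma Sr_on_word [simp]: "Sr g r (word w) = Sr_word g r w"
  by (simp add: Sr_eq_pm_extend word_def)

lemma harm_word_word [simp]: "harm g (word u) (word v) = harm_word g u v"
  by (simp add: harm_eq_pm_extend2 word_def)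

lemma zprod_single_single [simp]: "zprod g (Poly_Mapping.single x 1) (Poly_Mapping.single y 1) = g x y"
  by (simp add: zprod_eq_pm_extend2)

lemma circ_single_word [simp]: "circ g (Poly_Mapping.single x 1) (word w) = circ_word g x w"
  by (simp add: circ_def word_def)

(* Both sides are linear in each argument, so it suffices to check letters and words,
   where the identity is a defining equation. *)
lemma Sr_ncmult_zemb:
  "Sr g r (ncmult (zemb b) X) = ncmult (zemb b) (Sr g r X) + pm_smult r (circ g b (Sr g r X))"
  by (rule pm_linear_eqI[where p = b], (intro pm_linear_intros)+,
      rule pm_linear_eqI[where p = X], (intro pm_linear_intros)+)
     (simp add: circ_letter_eq_circ ncsmult_eq_pm_smult flip: word_def)

lemma circ_ncmult_zemb: "circ g b (ncmult (zemb c) X) = ncmult (zemb (zprod g b c)) X"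
  by (rule pm_linear_eqI[where p = b], (intro pm_linear_intros)+,
      rule pm_linear_eqI[where p = c], (intro pm_linear_intros)+,
      rule pm_linear_eqI[where p = X], (intro pm_linear_intros)+)
     (simp add: circ_word_def flip: word_def)

lemma harm_ncmult_zemb:
  "harm g (ncmult (zemb b) U) (ncmult (zemb c) V)
     = ncmult (zemb b) (harm g U (ncmult (zemb c) V)) + ncmult (zemb c) (harm g (ncmult (zemb b) U) V)
       + ncmult (zemb (zprod g b c)) (harm g U V)"
  by (rule pm_linear_eqI[where p = b], (intro pm_linear_intros)+,
      rule pm_linear_eqI[where p = c], (intro pm_linear_intros)+,
      rule pm_linear_eqI[where p = U], (intro pm_linear_intros)+,
      rule pm_linear_eqI[where p = V], (intro pm_linear_intros)+)
     (simp flip: word_def)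

lemma harm_empty_left [simp]: "harm g (word []) q = q"
  by (rule pm_linear_eqI[where p = q], (intro pm_linear_intros)+) (simp flip: word_def)

lemma harm_empty_right [simp]: "harm g p (word []) = p"
proof (rule pm_linear_eqI[where p = p], (intro pm_linear_intros)+)
  show "harm g (Poly_Mapping.single w 1) (word []) = Poly_Mapping.single w 1" for w
    by (cases w) (simp_all flip: word_def)
qed

lemma circ_empty [simp]: "circ g b (word []) = 0"
  by (rule pm_linear_eqI[where p = b], (intro pm_linear_intros)+) (simp add: circ_word_def)

lemma sum_atMost_diff_swap:
  "(\<Sum>k\<le>n. \<Sum>j\<le>n - k. f k j) = (\<Sum>j\<le>(n::nat). \<Sum>k\<le>n - j. f k j)"
proof -
  have "(\<Sum>k\<le>n. \<Sum>j\<le>n - k. f k j) = (\<Sum>k\<in>{..n}. \<Sum>j\<in>{j. j \<in> {..n} \<and> k + j \<le> n}. f k j)"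
    by (intro sum.cong) auto
  also have "\<dots> = (\<Sum>j\<in>{..n}. \<Sum>k\<in>{k. k \<in> {..n} \<and> k + j \<le> n}. f k j)"
    by (rule sum.swap_restrict) auto
  also have "\<dots> = (\<Sum>j\<le>n. \<Sum>k\<le>n - j. f k j)"
    by (intro sum.cong) auto
  finally show ?thesis .
qed

primrec circ_pow :: "('l \<Rightarrow> 'l \<Rightarrow> ('l \<Rightarrow>\<^sub>0 'c::comm_ring_1)) \<Rightarrow> ('l \<Rightarrow>\<^sub>0 'c) \<Rightarrow> nat \<Rightarrow> ('l \<Rightarrow>\<^sub>0 'c)" where
  "circ_pow g a 0 = a"
| "circ_pow g a (Suc k) = zprod g a (circ_pow g a k)"

definition circ_conv :: "('l \<Rightarrow> 'l \<Rightarrow> ('l \<Rightarrow>\<^sub>0 'c::comm_ring_1)) \<Rightarrow> ('l \<Rightarrow>\<^sub>0 'c) \<Rightarrow> 'c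
    \<Rightarrow> (nat \<Rightarrow> ('l, 'c) nc) \<Rightarrow> nat \<Rightarrow> ('l, 'c) nc" where
  "circ_conv g a r X n = (\<Sum>k\<le>n. pm_smult (r ^ k) (ncmult (zemb (circ_pow g a k)) (X (n - k))))"

lemma Sr_ncpow_Suc:
  "Sr g r (ncpow (zemb a) (Suc n)) = circ_conv g a r (\<lambda>m. Sr g r (ncpow (zemb a) m)) n"
proof (induction n)
  case 0
  show ?case using Sr_ncmult_zemb[of g r a "word []"] by (simp add: circ_conv_def)
next
  case (Suc n)
  let ?S = "\<lambda>m. Sr g r (ncpow (zemb a) m)"
  let ?Z = "\<lambda>k X. ncmult (zemb (circ_pow g a k)) X"
  have lin_circ: "pm_linear (circ g a)" by (intro pm_linear_intros)
  have "?S (Suc (Suc n)) = ?Z 0 (?S (Suc n)) + pm_smult r (circ g a (?S (Suc n)))"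
    using Sr_ncmult_zemb[of g r a "ncpow (zemb a) (Suc n)"] by simp
  also have "circ g a (?S (Suc n)) = (\<Sum>k\<le>n. pm_smult (r ^ k) (?Z (Suc k) (?S (n - k))))"
    unfolding Suc.IH circ_conv_def
    by (simp add: pm_linear_sum[OF lin_circ] pm_linear_smult[OF lin_circ] circ_ncmult_zemb)
  also have "pm_smult r \<dots> = (\<Sum>k\<le>n. pm_smult (r ^ Suc k) (?Z (Suc k) (?S (Suc n - Suc k))))"
    by (simp add: pm_smult_sum_right)
  also have "?Z 0 (?S (Suc n)) + \<dots> = circ_conv g a r ?S (Suc n)"
    unfolding circ_conv_def by (subst sum.atMost_Suc_shift) simp
  finally show ?case .
qed

definition harm_pow_S :: "('l \<Rightarrow> 'l \<Rightarrow> ('l \<Rightarrow>\<^sub>0 'c::comm_ring_1)) \<Rightarrow> ('l \<Rightarrow>\<^sub>0 'c) \<Rightarrow> nat \<Rightarrow> nat \<Rightarrow> ('l, 'c) nc" where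
  "harm_pow_S g a i m = harm g (ncpow (zemb a) i) (Sr g 1 (ncpow (zemb a) m))"

lemma harm_pow_S_0_Suc: "harm_pow_S g a 0 (Suc m) = circ_conv g a 1 (harm_pow_S g a 0) m"
  unfolding harm_pow_S_def Sr_ncpow_Suc by (simp add: circ_conv_def)

lemma harm_pow_S_Suc_0: "harm_pow_S g a (Suc i) 0 = circ_conv g a 1 (harm_pow_S g a i) 0"
  by (simp add: harm_pow_S_def circ_conv_def)

lemma harm_pow_S_Suc_Suc:
  "harm_pow_S g a (Suc i) (Suc m)
     = circ_conv g a 1 (harm_pow_S g a (Suc i)) m + circ_conv g a 1 (harm_pow_S g a i) (Suc m)"
proof -
  let ?W = "\<lambda>n. ncpow (zemb a) n"
  let ?S = "\<lambda>n. Sr g 1 (ncpow (zemb a) n)"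
  let ?Z = "\<lambda>k X. ncmult (zemb (circ_pow g a k)) X"
  have lin_harm: "pm_linear (harm g (ncmult (zemb a) (?W i)))"
    and lin_harm': "pm_linear (harm g (?W i))"
    and lin_ncmult: "pm_linear (ncmult (zemb a))"
    by (intro pm_linear_intros)+
  have shift: "?Z 0 (harm_pow_S g a i (Suc m)) + (\<Sum>k\<le>m. ?Z (Suc k) (harm_pow_S g a i (m - k)))
      = circ_conv g a 1 (harm_pow_S g a i) (Suc m)"
    unfolding circ_conv_def by (subst sum.atMost_Suc_shift) simp
  have "harm_pow_S g a (Suc i) (Suc m) = (\<Sum>k\<le>m. harm g (ncmult (zemb a) (?W i)) (?Z k (?S (m - k))))"
    unfolding harm_pow_S_def Sr_ncpow_Suc by (simp add: circ_conv_def pm_linear_sum[OF lin_harm])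
  also have "\<dots> = (\<Sum>k\<le>m. ?Z 0 (harm g (?W i) (?Z k (?S (m - k))))
      + ?Z k (harm_pow_S g a (Suc i) (m - k)) + ?Z (Suc k) (harm_pow_S g a i (m - k)))"
    by (intro sum.cong) (simp_all add: harm_ncmult_zemb harm_pow_S_def)
  also have "\<dots> = ?Z 0 (harm_pow_S g a i (Suc m)) + circ_conv g a 1 (harm_pow_S g a (Suc i)) m
      + (\<Sum>k\<le>m. ?Z (Suc k) (harm_pow_S g a i (m - k)))"
    unfolding harm_pow_S_def Sr_ncpow_Suc
    by (simp add: circ_conv_def sum.distrib pm_linear_sum[OF lin_ncmult] pm_linear_sum[OF lin_harm'])
  finally show ?thesis
    using shift by (simp add: algebra_simps)
qed

lemma harm_pow_S_Suc_diff:
  assumes "i \<le> Suc n"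
  shows "harm_pow_S g a i (Suc n - i)
    = (if i \<le> n then circ_conv g a 1 (harm_pow_S g a i) (n - i) else 0)
      + (if i = 0 then 0 else circ_conv g a 1 (harm_pow_S g a (i - 1)) (Suc n - i))"
proof -
  consider "i = 0" | "i = Suc n" | j where "i = Suc j" "j < n"
    using assms by (cases i) (auto simp: le_less)
  then show ?thesis
  proof cases
    case 1
    then show ?thesis by (simp add: harm_pow_S_0_Suc)
  next
    case 2
    then show ?thesis by (simp add: harm_pow_S_Suc_0)
  next
    case 3
    then have "Suc n - i = Suc (n - i)" by simp
    with 3 show ?thesis by (simp add: harm_pow_S_Suc_Suc)
  qed
qed

definition harm_sum :: "('l \<Rightarrow> 'l \<Rightarrow> ('l \<Rightarrow>\<^sub>0 'c::comm_ring_1)) \<Rightarrow> ('l \<Rightarrow>\<^sub>0 'c) \<Rightarrow> 'c \<Rightarrow> nat \<Rightarrow> ('l, 'c) nc" where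
  "harm_sum g a r n = (\<Sum>i\<le>n. pm_smult (r ^ (n - i) * (1 - r) ^ i) (harm_pow_S g a i (n - i)))"

lemma harm_sum_Suc_eq:
  "harm_sum g a r (Suc n)
     = (\<Sum>j\<le>n. pm_smult (r ^ (n - j) * (1 - r) ^ j) (circ_conv g a 1 (harm_pow_S g a j) (n - j)))"
proof -
  let ?s = "1 - r"
  let ?Y = "\<lambda>j. circ_conv g a 1 (harm_pow_S g a j) (n - j)"
  have first: "(\<Sum>i\<le>Suc n. pm_smult (r ^ (Suc n - i) * ?s ^ i) (if i \<le> n then ?Y i else 0))
      = (\<Sum>j\<le>n. pm_smult (r ^ Suc (n - j) * ?s ^ j) (?Y j))"
    by (simp add: Suc_diff_le)
  have second: "(\<Sum>i\<le>Suc n. pm_smult (r ^ (Suc n - i) * ?s ^ i)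
        (if i = 0 then 0 else circ_conv g a 1 (harm_pow_S g a (i - 1)) (Suc n - i)))
      = (\<Sum>j\<le>n. pm_smult (r ^ (n - j) * ?s ^ Suc j) (?Y j))"
    by (simp add: sum.atMost_Suc_shift del: sum.atMost_Suc)
  have coeff: "r ^ Suc m * ?s ^ j + r ^ m * ?s ^ Suc j = r ^ m * ?s ^ j" for m j
    by (simp add: algebra_simps)
  have "harm_sum g a r (Suc n)
      = (\<Sum>i\<le>Suc n. pm_smult (r ^ (Suc n - i) * ?s ^ i) (if i \<le> n then ?Y i else 0))
        + (\<Sum>i\<le>Suc n. pm_smult (r ^ (Suc n - i) * ?s ^ i)
             (if i = 0 then 0 else circ_conv g a 1 (harm_pow_S g a (i - 1)) (Suc n - i)))"
    unfolding harm_sum_def sum.distrib[symmetric]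
    by (intro sum.cong) (simp_all add: harm_pow_S_Suc_diff pm_smult_add_right)
  also have "\<dots> = (\<Sum>j\<le>n. pm_smult (r ^ Suc (n - j) * ?s ^ j + r ^ (n - j) * ?s ^ Suc j) (?Y j))"
    by (simp only: first second sum.distrib[symmetric] pm_smult_add_left)
  also have "\<dots> = (\<Sum>j\<le>n. pm_smult (r ^ (n - j) * ?s ^ j) (?Y j))"
    by (simp only: coeff)
  finally show ?thesis .
qed

lemma circ_conv_harm_sum:
  "circ_conv g a r (harm_sum g a r) n
     = (\<Sum>j\<le>n. pm_smult (r ^ (n - j) * (1 - r) ^ j) (circ_conv g a 1 (harm_pow_S g a j) (n - j)))"
proof -
  let ?c = "\<lambda>j. r ^ (n - j) * (1 - r) ^ j"
  let ?Z = "\<lambda>k X. ncmult (zemb (circ_pow g a k)) X"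
  have lin_Z: "pm_linear (?Z k)" for k
    by (intro pm_linear_intros)
  have "pm_smult (r ^ k) (?Z k (harm_sum g a r (n - k)))
      = (\<Sum>j\<le>n - k. pm_smult (?c j) (?Z k (harm_pow_S g a j (n - k - j))))" if "k \<le> n" for k
  proof -
    have "r ^ k * (r ^ (n - k - j) * (1 - r) ^ j) = ?c j" if "j \<le> n - k" for j
    proof -
      from \<open>k \<le> n\<close> that have "k + (n - k - j) = n - j" by simp
      then show ?thesis by (metis mult.assoc power_add)
    qed
    then show ?thesis
      unfolding harm_sum_def
      by (simp add: pm_linear_sum[OF lin_Z] pm_linear_smult[OF lin_Z] pm_smult_sum_right)
  qed
  then have "circ_conv g a r (harm_sum g a r) n
      = (\<Sum>k\<le>n. \<Sum>j\<le>n - k. pm_smult (?c j) (?Z k (harm_pow_S g a j (n - k - j))))"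
    unfolding circ_conv_def by (intro sum.cong) simp_all
  also have "\<dots> = (\<Sum>j\<le>n. \<Sum>k\<le>n - j. pm_smult (?c j) (?Z k (harm_pow_S g a j (n - j - k))))"
    by (subst sum_atMost_diff_swap) (simp add: diff_commute add.commute)
  also have "\<dots> = (\<Sum>j\<le>n. pm_smult (?c j) (circ_conv g a 1 (harm_pow_S g a j) (n - j)))"
    by (simp add: circ_conv_def pm_smult_sum_right)
  finally show ?thesis .
qed

lemma harm_sum_Suc: "harm_sum g a r (Suc n) = circ_conv g a r (harm_sum g a r) n"
  by (simp only: harm_sum_Suc_eq circ_conv_harm_sum)

lemma Sr_ncpow_eq_harm_sum: "Sr g r (ncpow (zemb a) n) = harm_sum g a r n"
proof (induction n rule: less_induct)
  case (less n)
  show ?case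
  proof (cases n)
    case 0
    then show ?thesis by (simp add: harm_sum_def harm_pow_S_def)
  next
    case (Suc m)
    have "circ_conv g a r (\<lambda>k. Sr g r (ncpow (zemb a) k)) m = circ_conv g a r (harm_sum g a r) m"
      unfolding circ_conv_def using Suc by (intro sum.cong) (simp_all add: less.IH)
    then show ?thesis
      by (simp only: Suc Sr_ncpow_Suc harm_sum_Suc)
  qed
qed

theorem proposition2p3:
  fixes g :: "'l \<Rightarrow> 'l \<Rightarrow> ('l \<Rightarrow>\<^sub>0 'k::comm_ring_1)"
    and a :: "'l \<Rightarrow>\<^sub>0 'k"
    and n :: nat
  assumes "rat_algebra TYPE('k)"
    and "\<And>x y. g x y = g y x"
    and "\<And>x y z. zprod g (zprod g (Poly_Mapping.single x 1) (Poly_Mapping.single y 1)) (Poly_Mapping.single z 1)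
               = zprod g (Poly_Mapping.single x 1) (zprod g (Poly_Mapping.single y 1) (Poly_Mapping.single z 1))"
    and "n \<ge> 1"
  shows "Sr (\<lambda>x y. liftc (g x y)) [:0, 1:] (ncpow (zemb (liftc a)) n)
       = (\<Sum>i = 0..n. ncsmult ([:0, 1:] ^ (n - i) * (1 - [:0, 1:]) ^ i)
            (harm (\<lambda>x y. liftc (g x y)) (ncpow (zemb (liftc a)) i)
                  (Sr (\<lambda>x y. liftc (g x y)) 1 (ncpow (zemb (liftc a)) (n - i)))))"
  using Sr_ncpow_eq_harm_sum[of "\<lambda>x y. liftc (g x y)" "[:0, 1:]" "liftc a" n]
  unfolding harm_sum_def harm_pow_S_def ncsmult_eq_pm_smult atLeast0AtMost .

end
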